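(* Let $SG$ be a signed graph and $e,e'$ two distinct parallel edges of $SG$ with the same sign (parallel meaning they join the same pair of vertices, where the two endpoints may coincide, i.e. both may be loops at the same vertex). Then for all $i$, $H^i(SG)\cong H^i(SG-e')$ and $H^i_b(SG)\cong H^i_b(SG-e')$.
   Context: Signed graphs: $SG=(G,\sigma)$, $G$ finite (loops, multiple edges allowed), $\sigma:E(G)\to\{\pm1\}$; $SG-e'$ deletes $e'$. Negative circuit: product of edge signs $-1$ (a loop is a circuit of one edge); balanced = no negative circuit. $[G:s]$, $[SG:s]$: spanning subgraph with edge set $s$. Complexes: Fix a total order on $E(G)$. An enhanced state of $G$ is $S=(s,c)$, $c$ labels each component of $[G:s]$ by $1$ or $x$; $j(S)$ = number of $x$-labels (grading). With $m(1,1)=1$, $m(1,x)=m(x,1)=x$, $m(x,x)=0$: for $a\notin s$, $S_a=(s\cup\{a\},c_a)$ where a component containing both ends of $a$ keeps its label and if $a$ joins components $E_i,E_j$ the merged one gets $m(c(E_i),c(E_j))$ ($S_a=0$ if both are $x$). $d(S)=\sum_{a\notin s}(-1)^{n(a)}S_a$, $n(a)$ = number of edges of $s$ preceding $a$. $H^i(SG)$: cohomology of $C^\bullet(SG)$, free on enhanced states whose $c$ assigns $1$ to every unbalanced component of $[SG:s]$, differential $d_s=f\circ d$ with $f$ projecting onto these states. $H^i_b(SG)$: cohomology of $C^\bullet_b(SG)$, free on enhanced states with $[SG:s]$ balanced, differential $d_b=f_b\circ d$, $f_b$ the analogous projection. *)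

theory Defs
  imports "HOL-Algebra.Algebra"
begin

text \<open>A signed graph is given by a vertex set V, an edge set E, an endpoint map
  ends (ends e = {u,v}; a loop at u has ends e = {u}), and a sign map sigma with values 1 or -1.
  Multiple edges are allowed (distinct edges may have equal ends).
  The total order on edges is the order of the type 'e.\<close>

definition signed_graph :: "'v set \<Rightarrow> 'e set \<Rightarrow> ('e \<Rightarrow> 'v set) \<Rightarrow> ('e \<Rightarrow> int) \<Rightarrow> bool" where
  "signed_graph V E ends sigma \<longleftrightarrow> finite V \<and> finite E \<and>
     (\<forall>e\<in>E. ends e \<subseteq> V \<and> ends e \<noteq> {} \<and> card (ends e) \<le> 2) \<and>
     (\<forall>e\<in>E. sigma e = 1 \<or> sigma e = -1)"

definition adj :: "('e \<Rightarrow> 'v set) \<Rightarrow> 'e set \<Rightarrow> ('v \<times> 'v) set" where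
  "adj ends s = {(u, v). \<exists>e\<in>s. ends e = {u, v}}"

definition comps :: "'v set \<Rightarrow> ('e \<Rightarrow> 'v set) \<Rightarrow> 'e set \<Rightarrow> 'v set set" where
  "comps V ends s = V // ((adj ends s)\<^sup>*)"

text \<open>A circuit: distinct edges es = [e_0,...,e_(k-1)] (k >= 1) and distinct vertices
  vs = [v_0,...,v_(k-1)] with e_i joining v_i and v_(i+1 mod k). A loop is a circuit of one edge.\<close>
definition is_circuit :: "('e \<Rightarrow> 'v set) \<Rightarrow> 'e list \<Rightarrow> 'v list \<Rightarrow> bool" where
  "is_circuit ends es vs \<longleftrightarrow> es \<noteq> [] \<and> length vs = length es \<and> distinct es \<and> distinct vs \<and>
     (\<forall>k < length es. ends (es ! k) = {vs ! k, vs ! ((k + 1) mod length es)})"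

definition neg_circuit_in :: "('e \<Rightarrow> 'v set) \<Rightarrow> ('e \<Rightarrow> int) \<Rightarrow> 'e set \<Rightarrow> 'v set \<Rightarrow> bool" where
  "neg_circuit_in ends sigma s K \<longleftrightarrow>
     (\<exists>es vs. is_circuit ends es vs \<and> set es \<subseteq> s \<and> set vs \<subseteq> K \<and> prod_list (map sigma es) = -1)"

definition balanced_sub :: "('e \<Rightarrow> 'v set) \<Rightarrow> ('e \<Rightarrow> int) \<Rightarrow> 'e set \<Rightarrow> bool" where
  "balanced_sub ends sigma s \<longleftrightarrow> \<not> neg_circuit_in ends sigma s UNIV"

text \<open>Enhanced states S = (s, X): X is the set of components of [G:s] labelled x;
  all other components are labelled 1.\<close>
type_synonym ('e, 'v) estate = "'e set \<times> 'v set set"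

definition states :: "'v set \<Rightarrow> 'e set \<Rightarrow> ('e \<Rightarrow> 'v set) \<Rightarrow> ('e, 'v) estate set" where
  "states V E ends = {S. fst S \<subseteq> E \<and> snd S \<subseteq> comps V ends (fst S)}"

text \<open>S_a (None represents 0): a component of [G:s+a] is labelled x iff it contains an
  x-labelled component of [G:s]; S_a = 0 iff two x-labelled components get merged.
  This is exactly the rule with m(1,1)=1, m(1,x)=m(x,1)=x, m(x,x)=0.\<close>
definition succ_state :: "'v set \<Rightarrow> ('e \<Rightarrow> 'v set) \<Rightarrow> ('e, 'v) estate \<Rightarrow> 'e \<Rightarrow> ('e, 'v) estate option" where
  "succ_state V ends S a = (let s' = insert a (fst S) in
     if (\<exists>K'\<in>comps V ends s'. \<exists>K1\<in>snd S. \<exists>K2\<in>snd S. K1 \<noteq> K2 \<and> K1 \<subseteq> K' \<and> K2 \<subseteq> K')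
     then None
     else Some (s', {K' \<in> comps V ends s'. \<exists>K\<in>snd S. K \<subseteq> K'}))"

text \<open>Generic complex: P selects the admissible enhanced states (basis of the complex).\<close>
definition adm_states :: "'v set \<Rightarrow> 'e set \<Rightarrow> ('e \<Rightarrow> 'v set) \<Rightarrow> ('e set \<Rightarrow> 'v set set \<Rightarrow> bool)
    \<Rightarrow> ('e, 'v) estate set" where
  "adm_states V E ends P = {S \<in> states V E ends. P (fst S) (snd S)}"

definition basis :: "'v set \<Rightarrow> 'e set \<Rightarrow> ('e \<Rightarrow> 'v set) \<Rightarrow> ('e set \<Rightarrow> 'v set set \<Rightarrow> bool)
    \<Rightarrow> int \<Rightarrow> nat \<Rightarrow> ('e, 'v) estate set" where
  "basis V E ends P i j = {S \<in> adm_states V E ends P. int (card (fst S)) = i \<and> card (snd S) = j}"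

definition dcoef :: "'v set \<Rightarrow> 'e set \<Rightarrow> ('e \<Rightarrow> 'v set) \<Rightarrow> ('e::linorder, 'v) estate \<Rightarrow> ('e, 'v) estate \<Rightarrow> int" where
  "dcoef V E ends S T = (\<Sum>a\<in>E - fst S.
      if succ_state V ends S a = Some T then (-1) ^ card {b \<in> fst S. b < a} else 0)"

text \<open>Integer cochains are functions from enhanced states to int supported on the basis.
  The differential is d followed by the projection onto admissible states.\<close>
definition diff :: "'v set \<Rightarrow> 'e set \<Rightarrow> ('e \<Rightarrow> 'v set) \<Rightarrow> ('e set \<Rightarrow> 'v set set \<Rightarrow> bool)
    \<Rightarrow> (('e::linorder, 'v) estate \<Rightarrow> int) \<Rightarrow> (('e, 'v) estate \<Rightarrow> int)" where
  "diff V E ends P f = (\<lambda>T. if T \<in> adm_states V E ends P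
      then (\<Sum>S\<in>adm_states V E ends P. f S * dcoef V E ends S T) else 0)"

definition cochains :: "'v set \<Rightarrow> 'e set \<Rightarrow> ('e \<Rightarrow> 'v set) \<Rightarrow> ('e set \<Rightarrow> 'v set set \<Rightarrow> bool)
    \<Rightarrow> int \<Rightarrow> nat \<Rightarrow> (('e, 'v) estate \<Rightarrow> int) set" where
  "cochains V E ends P i j = {f. \<forall>S. f S \<noteq> 0 \<longrightarrow> S \<in> basis V E ends P i j}"

definition cochain_group :: "'v set \<Rightarrow> 'e set \<Rightarrow> ('e \<Rightarrow> 'v set) \<Rightarrow> ('e set \<Rightarrow> 'v set set \<Rightarrow> bool)
    \<Rightarrow> int \<Rightarrow> nat \<Rightarrow> (('e, 'v) estate \<Rightarrow> int) monoid" where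
  "cochain_group V E ends P i j =
     \<lparr>carrier = cochains V E ends P i j, monoid.mult = (\<lambda>f g S. f S + g S), one = (\<lambda>S. 0)\<rparr>"

definition cocycles :: "'v set \<Rightarrow> 'e set \<Rightarrow> ('e \<Rightarrow> 'v set) \<Rightarrow> ('e set \<Rightarrow> 'v set set \<Rightarrow> bool)
    \<Rightarrow> int \<Rightarrow> nat \<Rightarrow> (('e::linorder, 'v) estate \<Rightarrow> int) set" where
  "cocycles V E ends P i j = {f \<in> cochains V E ends P i j. diff V E ends P f = (\<lambda>S. 0)}"

definition coboundaries :: "'v set \<Rightarrow> 'e set \<Rightarrow> ('e \<Rightarrow> 'v set) \<Rightarrow> ('e set \<Rightarrow> 'v set set \<Rightarrow> bool)
    \<Rightarrow> int \<Rightarrow> nat \<Rightarrow> (('e::linorder, 'v) estate \<Rightarrow> int) set" where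
  "coboundaries V E ends P i j = diff V E ends P ` cochains V E ends P (i - 1) j"

definition cohom :: "'v set \<Rightarrow> 'e set \<Rightarrow> ('e \<Rightarrow> 'v set) \<Rightarrow> ('e set \<Rightarrow> 'v set set \<Rightarrow> bool)
    \<Rightarrow> int \<Rightarrow> nat \<Rightarrow> (('e::linorder, 'v) estate \<Rightarrow> int) set monoid" where
  "cohom V E ends P i j =
     (cochain_group V E ends P i j)\<lparr>carrier := cocycles V E ends P i j\<rparr> Mod coboundaries V E ends P i j"

text \<open>H^{i,j}(SG): admissible states label every unbalanced component of [SG:s] by 1.\<close>
definition H :: "'v set \<Rightarrow> 'e set \<Rightarrow> ('e \<Rightarrow> 'v set) \<Rightarrow> ('e \<Rightarrow> int) \<Rightarrow> int \<Rightarrow> nat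
    \<Rightarrow> (('e::linorder, 'v) estate \<Rightarrow> int) set monoid" where
  "H V E ends sigma i j = cohom V E ends (\<lambda>s L. \<forall>K\<in>L. \<not> neg_circuit_in ends sigma s K) i j"

definition Hb :: "'v set \<Rightarrow> 'e set \<Rightarrow> ('e \<Rightarrow> 'v set) \<Rightarrow> ('e \<Rightarrow> int) \<Rightarrow> int \<Rightarrow> nat
    \<Rightarrow> (('e::linorder, 'v) estate \<Rightarrow> int) set monoid" where
  "Hb V E ends sigma i j = cohom V E ends (\<lambda>s L. balanced_sub ends sigma s) i j"

end

theory Submission
  imports Defs
begin

text \<open>Since the differential only adds edges, the enhanced states containing e' span a
  subcomplex of C(SG), and the complex of SG - e' is the quotient by it: its states are those
  avoiding e', and restricting a cochain to them is a chain map. Once e' belongs to s, adding its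
  parallel twin e changes neither the components of [G:s] nor which of them carry a negative
  circuit: a circuit through both e and e' has length two and is positive because the signs
  agree, and any other circuit through e can be rerouted through e'. Consequently the map sending
  a cochain w to S \<mapsto> \<plusminus>w(S + e) is a contracting homotopy of the subcomplex, which is
  therefore acyclic. Restriction is then onto on cocycles, and a cocycle restricts to a
  coboundary only if it is one itself, which gives the isomorphism in every bidegree.\<close>

section \<open>Components of spanning subgraphs\<close>

lemma sym_adj: "sym (adj ends s)"
  unfolding adj_def sym_def by (auto simp: insert_commute)

lemma adj_mono: "s \<subseteq> s' \<Longrightarrow> adj ends s \<subseteq> adj ends s'"
  unfolding adj_def by auto

lemma equiv_rtrancl_adj: "equiv UNIV ((adj ends s)\<^sup>*)"
  by (simp add: equiv_def refl_rtrancl sym_rtrancl[OF sym_adj] trans_rtrancl)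

lemma comps_in_quotient_UNIV: "K \<in> comps V ends s \<Longrightarrow> K \<in> UNIV // (adj ends s)\<^sup>*"
  unfolding comps_def quotient_def by blast

lemma comps_nonempty: "K \<in> comps V ends s \<Longrightarrow> K \<noteq> {}"
  unfolding comps_def quotient_def by auto

lemma comps_disjoint:
  assumes "K1 \<in> comps V ends s" "K2 \<in> comps V ends s" "z \<in> K1" "z \<in> K2"
  shows "K1 = K2"
  using quotient_disj[OF equiv_rtrancl_adj comps_in_quotient_UNIV[OF assms(1)]
      comps_in_quotient_UNIV[OF assms(2)]] assms(3,4) by blast

lemma comps_refine:
  assumes "K \<in> comps V ends s" "s \<subseteq> s'"
  shows "\<exists>K'\<in>comps V ends s'. K \<subseteq> K'"
proof -
  obtain x where x: "x \<in> V" "K = (adj ends s)\<^sup>* `` {x}"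
    using assms(1) unfolding comps_def quotient_def by blast
  have "K \<subseteq> (adj ends s')\<^sup>* `` {x}"
    unfolding x(2) by (intro Image_mono rtrancl_mono adj_mono[OF assms(2)]) simp
  moreover have "(adj ends s')\<^sup>* `` {x} \<in> comps V ends s'"
    unfolding comps_def quotient_def using x(1) by blast
  ultimately show ?thesis by blast
qed

lemma comps_subset_if_meet:
  assumes "K \<in> comps V ends s" "K' \<in> comps V ends s'" "s \<subseteq> s'" "z \<in> K" "z \<in> K'"
  shows "K \<subseteq> K'"
proof -
  obtain K'' where "K'' \<in> comps V ends s'" "K \<subseteq> K''" using comps_refine[OF assms(1,3)] by blast
  with comps_disjoint[OF _ assms(2)] assms(4,5) show ?thesis by blast
qed

lemma comps_between:
  assumes "K \<in> comps V ends s" "K'' \<in> comps V ends s2" "s \<subseteq> s1" "s1 \<subseteq> s2" "K \<subseteq> K''"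
  obtains K' where "K' \<in> comps V ends s1" "K \<subseteq> K'" "K' \<subseteq> K''"
proof -
  obtain K' where K': "K' \<in> comps V ends s1" "K \<subseteq> K'" using comps_refine[OF assms(1,3)] by blast
  obtain z where "z \<in> K" using comps_nonempty[OF assms(1)] by blast
  then have "K' \<subseteq> K''" using comps_subset_if_meet[OF K'(1) assms(2,4)] K'(2) assms(5) by blast
  then show ?thesis using that K' by blast
qed

lemma comps_subset_imp_eq:
  assumes "K1 \<in> comps V ends s" "K2 \<in> comps V ends s" "K1 \<subseteq> K2"
  shows "K1 = K2"
  using comps_nonempty[OF assms(1)] comps_disjoint[OF assms(1,2)] assms(3) by blast

section \<open>Merging and lifting labels\<close>

definition merges_labels :: "'v set \<Rightarrow> ('e \<Rightarrow> 'v set) \<Rightarrow> 'e set \<Rightarrow> 'v set set \<Rightarrow> bool" where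
  "merges_labels V ends s L \<longleftrightarrow>
     (\<exists>K'\<in>comps V ends s. \<exists>K1\<in>L. \<exists>K2\<in>L. K1 \<noteq> K2 \<and> K1 \<subseteq> K' \<and> K2 \<subseteq> K')"

definition lift_labels :: "'v set \<Rightarrow> ('e \<Rightarrow> 'v set) \<Rightarrow> 'e set \<Rightarrow> 'v set set \<Rightarrow> 'v set set" where
  "lift_labels V ends s L = {K' \<in> comps V ends s. \<exists>K\<in>L. K \<subseteq> K'}"

lemma succ_state_eq:
  "succ_state V ends S a =
     (if merges_labels V ends (insert a (fst S)) (snd S) then None
      else Some (insert a (fst S), lift_labels V ends (insert a (fst S)) (snd S)))"
  unfolding succ_state_def merges_labels_def lift_labels_def Let_def by simp

lemma succ_state_SomeD:
  assumes "succ_state V ends S a = Some T"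
  shows "fst T = insert a (fst S)" "snd T = lift_labels V ends (insert a (fst S)) (snd S)"
    and "\<not> merges_labels V ends (insert a (fst S)) (snd S)"
  using assms unfolding succ_state_eq by (auto split: if_splits)

lemma lift_labels_same: "L \<subseteq> comps V ends s \<Longrightarrow> lift_labels V ends s L = L"
  unfolding lift_labels_def using comps_subset_imp_eq by blast

lemma not_merges_labels_same: "L \<subseteq> comps V ends s \<Longrightarrow> \<not> merges_labels V ends s L"
  unfolding merges_labels_def using comps_subset_imp_eq by (metis subsetD)

lemma lift_labels_lift_labels:
  assumes "L \<subseteq> comps V ends s" "s \<subseteq> s1" "s1 \<subseteq> s2"
  shows "lift_labels V ends s2 (lift_labels V ends s1 L) = lift_labels V ends s2 L"
proof
  show "lift_labels V ends s2 L \<subseteq> lift_labels V ends s2 (lift_labels V ends s1 L)"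
  proof
    fix K'' assume "K'' \<in> lift_labels V ends s2 L"
    then obtain K where K: "K \<in> L" "K \<subseteq> K''" "K'' \<in> comps V ends s2"
      unfolding lift_labels_def by blast
    then obtain K' where "K' \<in> comps V ends s1" "K \<subseteq> K'" "K' \<subseteq> K''"
      using comps_between[OF _ K(3) assms(2,3) K(2)] assms(1) by blast
    then show "K'' \<in> lift_labels V ends s2 (lift_labels V ends s1 L)"
      unfolding lift_labels_def using K(1,3) by blast
  qed
qed (auto simp: lift_labels_def)

lemma merges_labels_mono:
  assumes "merges_labels V ends s1 L" "s1 \<subseteq> s2"
  shows "merges_labels V ends s2 L"
proof -
  obtain K' K1 K2 where K: "K' \<in> comps V ends s1" "K1 \<in> L" "K2 \<in> L" "K1 \<noteq> K2"
    "K1 \<subseteq> K'" "K2 \<subseteq> K'"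
    using assms(1) unfolding merges_labels_def by blast
  obtain K'' where "K'' \<in> comps V ends s2" "K' \<subseteq> K''" using comps_refine[OF K(1) assms(2)] by blast
  with K show ?thesis unfolding merges_labels_def by blast
qed

lemma merges_labels_lift_labelsD:
  assumes "L \<subseteq> comps V ends s" "merges_labels V ends s2 (lift_labels V ends s1 L)"
  shows "merges_labels V ends s2 L"
proof -
  obtain K'' K1' K2' where K': "K'' \<in> comps V ends s2" "K1' \<noteq> K2'"
    "K1' \<subseteq> K''" "K2' \<subseteq> K''" "K1' \<in> lift_labels V ends s1 L" "K2' \<in> lift_labels V ends s1 L"
    using assms(2) unfolding merges_labels_def by blast
  then obtain K1 K2 where K: "K1 \<in> L" "K2 \<in> L" "K1 \<subseteq> K1'" "K2 \<subseteq> K2'"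
    "K1' \<in> comps V ends s1" "K2' \<in> comps V ends s1"
    unfolding lift_labels_def by blast
  obtain z where "z \<in> K1" using comps_nonempty K(1) assms(1) by blast
  then have "K1 \<noteq> K2" using comps_disjoint[OF K(5,6), of z] K(3,4) K'(2) by auto
  moreover have "K1 \<subseteq> K''" "K2 \<subseteq> K''" using K(3,4) K'(3,4) by auto
  ultimately show ?thesis unfolding merges_labels_def using K'(1) K(1,2) by blast
qed

lemma merges_labels_cases:
  assumes "L \<subseteq> comps V ends s" "s \<subseteq> s1" "s1 \<subseteq> s2" "merges_labels V ends s2 L"
  shows "merges_labels V ends s1 L \<or> merges_labels V ends s2 (lift_labels V ends s1 L)"
proof -
  obtain K'' K1 K2 where K: "K'' \<in> comps V ends s2" "K1 \<in> L" "K2 \<in> L" "K1 \<noteq> K2"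
    "K1 \<subseteq> K''" "K2 \<subseteq> K''"
    using assms(4) unfolding merges_labels_def by blast
  obtain K1' where K1': "K1' \<in> comps V ends s1" "K1 \<subseteq> K1'" "K1' \<subseteq> K''"
    using comps_between[OF _ K(1) assms(2,3) K(5)] K(2) assms(1) by blast
  obtain K2' where K2': "K2' \<in> comps V ends s1" "K2 \<subseteq> K2'" "K2' \<subseteq> K''"
    using comps_between[OF _ K(1) assms(2,3) K(6)] K(3) assms(1) by blast
  show ?thesis
  proof (cases "K1' = K2'")
    case True
    then have "merges_labels V ends s1 L" unfolding merges_labels_def using K K1' K2' by blast
    then show ?thesis ..
  next
    case False
    have "K1' \<in> lift_labels V ends s1 L" "K2' \<in> lift_labels V ends s1 L"
      unfolding lift_labels_def using K K1' K2' by blast+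
    then have "merges_labels V ends s2 (lift_labels V ends s1 L)"
      unfolding merges_labels_def using False K(1) K1'(3) K2'(3) by blast
    then show ?thesis ..
  qed
qed

lemma merges_labels_lift_labels:
  assumes "L \<subseteq> comps V ends s" "s \<subseteq> s1" "s1 \<subseteq> s2"
  shows "merges_labels V ends s1 L \<or> merges_labels V ends s2 (lift_labels V ends s1 L)
     \<longleftrightarrow> merges_labels V ends s2 L"
  using merges_labels_mono[OF _ assms(3)] merges_labels_lift_labelsD[OF assms(1)]
    merges_labels_cases[OF assms] by blast

lemma succ_state_two_steps:
  assumes "snd S \<subseteq> comps V ends (fst S)"
  shows "(\<exists>T. succ_state V ends S a = Some T \<and> succ_state V ends T b = Some U) \<longleftrightarrow>
     \<not> merges_labels V ends (insert b (insert a (fst S))) (snd S) \<and>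
     U = (insert b (insert a (fst S)), lift_labels V ends (insert b (insert a (fst S))) (snd S))"
  using lift_labels_lift_labels[OF assms, of "insert a (fst S)" "insert b (insert a (fst S))"]
    merges_labels_lift_labels[OF assms, of "insert a (fst S)" "insert b (insert a (fst S))"]
  unfolding succ_state_eq by auto

lemma succ_state_two_steps_commute:
  assumes "snd S \<subseteq> comps V ends (fst S)"
  shows "(\<exists>T. succ_state V ends S a = Some T \<and> succ_state V ends T b = Some U) \<longleftrightarrow>
     (\<exists>T. succ_state V ends S b = Some T \<and> succ_state V ends T a = Some U)"
  unfolding succ_state_two_steps[OF assms] by (simp add: insert_commute)

lemma card_lift_labels:
  assumes "L \<subseteq> comps V ends s" "s \<subseteq> s'" "\<not> merges_labels V ends s' L"
  shows "card (lift_labels V ends s' L) = card L"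
proof -
  define up where "up K = (SOME K'. K' \<in> comps V ends s' \<and> K \<subseteq> K')" for K
  have up: "up K \<in> comps V ends s' \<and> K \<subseteq> up K" if "K \<in> L" for K
    unfolding up_def by (rule someI_ex) (use comps_refine[OF _ assms(2)] assms(1) that in blast)
  have "inj_on up L"
  proof (rule inj_onI)
    fix K1 K2 assume "K1 \<in> L" "K2 \<in> L" "up K1 = up K2"
    then show "K1 = K2" using up[of K1] up[of K2] assms(3) unfolding merges_labels_def by blast
  qed
  moreover have "up ` L = lift_labels V ends s' L"
  proof
    show "lift_labels V ends s' L \<subseteq> up ` L"
    proof
      fix K' assume "K' \<in> lift_labels V ends s' L"
      then obtain K where K: "K \<in> L" "K \<subseteq> K'" "K' \<in> comps V ends s'"
        unfolding lift_labels_def by blast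
      obtain z where "z \<in> K" using comps_nonempty K(1) assms(1) by blast
      then have "K' = up K" using comps_disjoint[OF K(3)] up[OF K(1)] K(2) by blast
      then show "K' \<in> up ` L" using K(1) by blast
    qed
  qed (auto simp: lift_labels_def dest: up)
  ultimately show ?thesis by (metis card_image)
qed

section \<open>Incidence signs and coefficients of the differential\<close>

definition incidence_sign :: "'e::linorder set \<Rightarrow> 'e \<Rightarrow> int" where
  "incidence_sign s a = (-1) ^ card {b \<in> s. b < a}"

lemma incidence_sign_square: "incidence_sign s a * incidence_sign s a = 1"
  unfolding incidence_sign_def by (simp flip: power_mult_distrib)

lemma incidence_sign_insert:
  assumes "finite s" "a \<notin> s"
  shows "incidence_sign (insert a s) b = (if a < b then - incidence_sign s b else incidence_sign s b)"
proof (cases "a < b")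
  case True
  then have "{x \<in> insert a s. x < b} = insert a {x \<in> s. x < b}" by auto
  then show ?thesis using True assms by (simp add: incidence_sign_def)
next
  case False
  then have "{x \<in> insert a s. x < b} = {x \<in> s. x < b}" by auto
  then show ?thesis using False by (simp add: incidence_sign_def)
qed

lemma incidence_sign_anticommute:
  fixes a b :: "'e::linorder"
  assumes "finite s" "a \<notin> s" "b \<notin> s" "a \<noteq> b"
  shows "incidence_sign s a * incidence_sign (insert a s) b = - (incidence_sign s b * incidence_sign (insert b s) a)"
  using assms by (cases "a < b") (auto simp: incidence_sign_insert)

lemma incidence_sign_exchange:
  fixes a b :: "'e::linorder"
  assumes "finite s" "a \<notin> s" "b \<notin> s" "a \<noteq> b"
  shows "incidence_sign s b * incidence_sign s a = - (incidence_sign (insert a s) b * incidence_sign (insert b s) a)"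
  using assms by (cases "a < b") (auto simp: incidence_sign_insert)

lemma dcoef_eq_incidence_sign:
  assumes "finite E" "a \<in> E - fst S" "succ_state V ends S a = Some T"
  shows "dcoef V E ends S T = incidence_sign (fst S) a"
proof -
  have "b = a" if "b \<in> E - fst S" "succ_state V ends S b = Some T" for b
    using succ_state_SomeD(1)[OF that(2)] succ_state_SomeD(1)[OF assms(3)] that(1) assms(2) by blast
  then have "dcoef V E ends S T =
      (\<Sum>b\<in>{a}. if succ_state V ends S b = Some T then (-1) ^ card {c \<in> fst S. c < b} else 0)"
    unfolding dcoef_def using assms(1,2) by (intro sum.mono_neutral_right) auto
  then show ?thesis using assms(3) by (simp add: incidence_sign_def)
qed

lemma dcoef_nonzeroD:
  assumes "dcoef V E ends S T \<noteq> 0"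
  obtains a where "a \<in> E - fst S" "succ_state V ends S a = Some T"
proof -
  have "\<exists>a\<in>E - fst S. succ_state V ends S a = Some T"
  proof (rule ccontr)
    assume "\<not> ?thesis"
    then have "dcoef V E ends S T = 0" unfolding dcoef_def by (intro sum.neutral) auto
    then show False using assms by simp
  qed
  then show ?thesis using that by blast
qed

lemma dcoef_nonzero_fst:
  assumes "dcoef V E ends S T \<noteq> 0"
  obtains a where "a \<in> E" "a \<notin> fst S" "fst T = insert a (fst S)"
  using dcoef_nonzeroD[OF assms] succ_state_SomeD(1) by (metis DiffE)

lemma dcoef_nonzero_path:
  assumes "dcoef V E ends S T \<noteq> 0" "dcoef V E ends T U \<noteq> 0"
    and "succ_state V ends S a = Some T1" "succ_state V ends S b = Some T2"
    and "fst U = insert b (insert a (fst S))"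
  shows "T = T1 \<or> T = T2"
proof -
  obtain c where c: "c \<in> E - fst S" "succ_state V ends S c = Some T"
    using dcoef_nonzeroD[OF assms(1)] by blast
  obtain d where "fst U = insert d (fst T)" using dcoef_nonzero_fst[OF assms(2)] by blast
  then have "c = a \<or> c = b" using succ_state_SomeD(1)[OF c(2)] c(1) assms(5) by blast
  then show ?thesis using c(2) assms(3,4) by auto
qed

lemma finite_comps: "finite V \<Longrightarrow> finite (comps V ends s)"
  unfolding comps_def quotient_def by simp

lemma finite_states:
  assumes "finite V" "finite E"
  shows "finite (states V E ends)"
proof (rule finite_subset)
  show "states V E ends \<subseteq> Pow E \<times> Pow (\<Union>s\<in>Pow E. comps V ends s)"
    unfolding states_def by (auto; blast)
  show "finite (Pow E \<times> Pow (\<Union>s\<in>Pow E. comps V ends s))"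
    using assms(2) finite_comps[OF assms(1)]
    by (intro finite_cartesian_product iffD2[OF finite_Pow_iff] finite_UN_I) auto
qed

section \<open>The complex spanned by admissible states\<close>

text \<open>The hypothesis admissible_pred makes the projected differential square to zero: both
  two-step paths between admissible states then pass through admissible states.\<close>

locale state_complex =
  fixes V :: "'v set" and E :: "'e::linorder set" and ends :: "'e \<Rightarrow> 'v set"
    and P :: "'e set \<Rightarrow> 'v set set \<Rightarrow> bool"
  assumes finite_V: "finite V" and finite_E: "finite E"
    and admissible_pred: "\<And>s L a T. L \<subseteq> comps V ends s \<Longrightarrow> a \<notin> s \<Longrightarrow>
        succ_state V ends (s, L) a = Some T \<Longrightarrow> P (fst T) (snd T) \<Longrightarrow> P s L"
begin

abbreviation "A \<equiv> adm_states V E ends P"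
abbreviation "dc \<equiv> dcoef V E ends"
abbreviation "D \<equiv> diff V E ends P"

lemma finite_A: "finite A"
  unfolding adm_states_def using finite_states[OF finite_V finite_E] by simp

lemma A_iff: "S \<in> A \<longleftrightarrow> fst S \<subseteq> E \<and> snd S \<subseteq> comps V ends (fst S) \<and> P (fst S) (snd S)"
  unfolding adm_states_def states_def by auto

lemma finite_fst_A: "S \<in> A \<Longrightarrow> finite (fst S)"
  using A_iff finite_E finite_subset by blast

lemma succ_state_in_A_back:
  assumes "succ_state V ends S a = Some T" "T \<in> A" "fst S \<subseteq> E"
    "snd S \<subseteq> comps V ends (fst S)" "a \<notin> fst S"
  shows "S \<in> A"
  using admissible_pred[of "snd S" "fst S" a T] assms unfolding A_iff by simp

lemma dc_comp_sum_zero: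
  assumes S: "S \<in> A" and U: "U \<in> A"
  shows "(\<Sum>T\<in>A. dc S T * dc T U) = 0"
proof (cases "\<exists>T\<in>A. dc S T * dc T U \<noteq> 0")
  case False
  then show ?thesis by (intro sum.neutral) auto
next
  case True
  then obtain T1 where T1: "T1 \<in> A" "dc S T1 \<noteq> 0" "dc T1 U \<noteq> 0" by auto
  obtain a where a: "a \<in> E - fst S" "succ_state V ends S a = Some T1"
    using dcoef_nonzeroD[OF T1(2)] by blast
  obtain b where b: "b \<in> E - fst T1" "succ_state V ends T1 b = Some U"
    using dcoef_nonzeroD[OF T1(3)] by blast
  have fst_T1: "fst T1 = insert a (fst S)" by (rule succ_state_SomeD(1)[OF a(2)])
  have fst_U: "fst U = insert b (insert a (fst S))" using succ_state_SomeD(1)[OF b(2)] fst_T1 by simp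
  have ab: "a \<noteq> b" "b \<notin> fst S" using b(1) fst_T1 by auto
  have S_comps: "snd S \<subseteq> comps V ends (fst S)" using S A_iff by blast
  obtain T2 where T2: "succ_state V ends S b = Some T2" "succ_state V ends T2 a = Some U"
    using succ_state_two_steps_commute[OF S_comps] a(2) b(2) by blast
  have fst_T2: "fst T2 = insert b (fst S)" by (rule succ_state_SomeD(1)[OF T2(1)])
  have "T2 \<in> A"
  proof (rule succ_state_in_A_back[OF T2(2) U])
    show "fst T2 \<subseteq> E" "snd T2 \<subseteq> comps V ends (fst T2)" "a \<notin> fst T2"
      using fst_T2 S b(1) a(1) ab succ_state_SomeD(2)[OF T2(1)]
      unfolding A_iff lift_labels_def by auto
  qed
  have "(\<Sum>T\<in>A. dc S T * dc T U) = (\<Sum>T\<in>{T1, T2}. dc S T * dc T U)"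
    using dcoef_nonzero_path[OF _ _ a(2) T2(1) fst_U] T1(1) \<open>T2 \<in> A\<close>
    by (intro sum.mono_neutral_right[OF finite_A]) auto
  also have "\<dots> = dc S T1 * dc T1 U + dc S T2 * dc T2 U"
    using fst_T1 fst_T2 ab a(1) by (subst sum.insert) auto
  also have "\<dots> = incidence_sign (fst S) a * incidence_sign (insert a (fst S)) b +
      incidence_sign (fst S) b * incidence_sign (insert b (fst S)) a"
    using dcoef_eq_incidence_sign[OF finite_E a] dcoef_eq_incidence_sign[OF finite_E b]
      dcoef_eq_incidence_sign[OF finite_E _ T2(1)] dcoef_eq_incidence_sign[OF finite_E _ T2(2)]
      fst_T1 fst_T2 ab a(1) b(1) by simp
  also have "\<dots> = 0"
    using incidence_sign_anticommute[OF finite_fst_A[OF S] _ ab(2) ab(1)] a(1) by simp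
  finally show ?thesis .
qed

lemma D_D: "D (D f) = (\<lambda>U. 0)"
proof
  fix U
  show "D (D f) U = 0"
  proof (cases "U \<in> A")
    case True
    have "D (D f) U = (\<Sum>T\<in>A. (\<Sum>S\<in>A. f S * dc S T) * dc T U)"
      unfolding diff_def using True by (auto intro!: sum.cong)
    also have "\<dots> = (\<Sum>T\<in>A. \<Sum>S\<in>A. f S * (dc S T * dc T U))"
      by (simp add: sum_distrib_right mult.assoc)
    also have "\<dots> = (\<Sum>S\<in>A. f S * (\<Sum>T\<in>A. dc S T * dc T U))"
      by (subst sum.swap) (simp add: sum_distrib_left)
    also have "\<dots> = 0" using dc_comp_sum_zero True by simp
    finally show ?thesis .
  qed (simp add: diff_def)
qed

lemma D_add: "D (\<lambda>S. f S + g S) = (\<lambda>T. D f T + D g T)"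
  unfolding diff_def by (auto simp: sum.distrib distrib_right)

lemma D_uminus: "D (\<lambda>S. - f S) = (\<lambda>T. - D f T)"
  unfolding diff_def by (auto simp: sum_negf)

lemma D_minus: "D (\<lambda>S. f S - g S) = (\<lambda>T. D f T - D g T)"
  unfolding diff_def by (auto simp: sum_subtractf left_diff_distrib)

lemma D_zero: "D (\<lambda>S. 0) = (\<lambda>S. 0)"
  unfolding diff_def by auto

lemma cochains_add:
  "f \<in> cochains V E ends P i j \<Longrightarrow> g \<in> cochains V E ends P i j \<Longrightarrow>
   (\<lambda>S. f S + g S) \<in> cochains V E ends P i j"
  unfolding cochains_def mem_Collect_eq
  by (metis add.right_neutral add_0)

lemma cochains_uminus: "f \<in> cochains V E ends P i j \<Longrightarrow> (\<lambda>S. - f S) \<in> cochains V E ends P i j"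
  unfolding cochains_def by auto

lemma cochains_zero: "(\<lambda>S. 0) \<in> cochains V E ends P i j"
  unfolding cochains_def by auto

lemma D_cochains:
  assumes f: "f \<in> cochains V E ends P (i - 1) j"
  shows "D f \<in> cochains V E ends P i j"
  unfolding cochains_def mem_Collect_eq
proof (intro allI impI)
  fix T assume nz: "D f T \<noteq> 0"
  then have T: "T \<in> A" unfolding diff_def by (simp split: if_splits)
  with nz have "(\<Sum>S\<in>A. f S * dc S T) \<noteq> 0" unfolding diff_def by simp
  then obtain S where "S \<in> A" "f S * dc S T \<noteq> 0" by (meson sum.neutral)
  then have S: "S \<in> A" "f S \<noteq> 0" "dc S T \<noteq> 0" by auto
  obtain a where a: "a \<in> E - fst S" "succ_state V ends S a = Some T"
    using dcoef_nonzeroD[OF S(3)] by blast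
  have S_comps: "snd S \<subseteq> comps V ends (fst S)" using S(1) A_iff by blast
  have "S \<in> basis V E ends P (i - 1) j" using f S(2) unfolding cochains_def by blast
  moreover have "card (fst T) = card (fst S) + 1"
    using succ_state_SomeD(1)[OF a(2)] a(1) finite_fst_A[OF S(1)] by simp
  moreover have "card (snd T) = card (snd S)"
    using succ_state_SomeD(2,3)[OF a(2)] card_lift_labels[OF S_comps subset_insertI] by simp
  ultimately show "T \<in> basis V E ends P i j"
    using T unfolding basis_def by simp
qed

abbreviation "cocycle_group i j \<equiv> (cochain_group V E ends P i j)\<lparr>carrier := cocycles V E ends P i j\<rparr>"

lemma cochain_group_simps [simp]:
  "monoid.mult (cochain_group V E ends P i j) = (\<lambda>f g S. f S + g S)"
  "monoid.one (cochain_group V E ends P i j) = (\<lambda>S. 0)"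
  unfolding cochain_group_def by simp_all

lemma cocycle_group_simps [simp]:
  "carrier (cocycle_group i j) = cocycles V E ends P i j"
  "monoid.mult (cocycle_group i j) = (\<lambda>f g S. f S + g S)"
  "monoid.one (cocycle_group i j) = (\<lambda>S. 0)"
  unfolding cochain_group_def by simp_all

lemma cocycles_uminus: "x \<in> cocycles V E ends P i j \<Longrightarrow> (\<lambda>S. - x S) \<in> cocycles V E ends P i j"
  unfolding cocycles_def by (auto simp: D_uminus cochains_uminus)

lemma comm_group_cocycle_group: "comm_group (cocycle_group i j)"
proof (rule comm_groupI)
  fix x y assume "x \<in> carrier (cocycle_group i j)" "y \<in> carrier (cocycle_group i j)"
  then show "x \<otimes>\<^bsub>cocycle_group i j\<^esub> y \<in> carrier (cocycle_group i j)"
    unfolding cocycles_def by (auto simp: D_add cochains_add)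
next
  show "\<one>\<^bsub>cocycle_group i j\<^esub> \<in> carrier (cocycle_group i j)"
    unfolding cocycles_def by (auto simp: D_zero cochains_zero)
next
  fix x assume "x \<in> carrier (cocycle_group i j)"
  then show "\<exists>y\<in>carrier (cocycle_group i j).
      y \<otimes>\<^bsub>cocycle_group i j\<^esub> x = \<one>\<^bsub>cocycle_group i j\<^esub>"
    using cocycles_uminus by (intro bexI[of _ "\<lambda>S. - x S"]) auto
qed (simp_all add: ac_simps)

lemma cocycle_group_inv:
  assumes x: "x \<in> carrier (cocycle_group i j)"
  shows "inv\<^bsub>cocycle_group i j\<^esub> x = (\<lambda>S. - x S)"
proof -
  interpret comm_group "cocycle_group i j" by (rule comm_group_cocycle_group)
  show ?thesis using x cocycles_uminus by (intro inv_equality) simp_all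
qed

lemma coboundaries_subset_cocycles: "coboundaries V E ends P i j \<subseteq> cocycles V E ends P i j"
  unfolding coboundaries_def cocycles_def using D_cochains D_D by blast

lemma subgroup_coboundaries: "subgroup (coboundaries V E ends P i j) (cocycle_group i j)"
proof -
  interpret comm_group "cocycle_group i j" by (rule comm_group_cocycle_group)
  show ?thesis
  proof (rule subgroupI)
    show "coboundaries V E ends P i j \<subseteq> carrier (cocycle_group i j)"
      using coboundaries_subset_cocycles by simp
    show "coboundaries V E ends P i j \<noteq> {}"
      unfolding coboundaries_def using cochains_zero by blast
  next
    fix x assume "x \<in> coboundaries V E ends P i j"
    then obtain f where "f \<in> cochains V E ends P (i - 1) j" "x = D f"
      unfolding coboundaries_def by blast
    moreover have "inv\<^bsub>cocycle_group i j\<^esub> x = D (\<lambda>S. - f S)"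
      using cocycle_group_inv coboundaries_subset_cocycles \<open>x \<in> coboundaries V E ends P i j\<close> calculation(2)
      by (simp add: D_uminus subset_iff)
    ultimately show "inv\<^bsub>cocycle_group i j\<^esub> x \<in> coboundaries V E ends P i j"
      unfolding coboundaries_def using cochains_uminus by blast
  next
    fix x y assume "x \<in> coboundaries V E ends P i j" "y \<in> coboundaries V E ends P i j"
    then obtain f g where f: "f \<in> cochains V E ends P (i - 1) j" "x = D f"
      and g: "g \<in> cochains V E ends P (i - 1) j" "y = D g"
      unfolding coboundaries_def by blast
    have "x \<otimes>\<^bsub>cocycle_group i j\<^esub> y = D (\<lambda>S. f S + g S)" unfolding f(2) g(2) D_add by simp
    then show "x \<otimes>\<^bsub>cocycle_group i j\<^esub> y \<in> coboundaries V E ends P i j"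
      unfolding coboundaries_def using cochains_add[OF f(1) g(1)] by blast
  qed
qed

lemma normal_coboundaries: "coboundaries V E ends P i j \<lhd> cocycle_group i j"
  using comm_group.subgroup_imp_normal[OF comm_group_cocycle_group subgroup_coboundaries] .

end

section \<open>A pair of parallel edges\<close>

definition add_edge :: "'e \<Rightarrow> ('e, 'v) estate \<Rightarrow> ('e, 'v) estate" where
  "add_edge a S = (insert a (fst S), snd S)"

lemma add_edge_inj: "a \<notin> fst S \<Longrightarrow> a \<notin> fst T \<Longrightarrow> add_edge a S = add_edge a T \<Longrightarrow> S = T"
  unfolding add_edge_def by (metis Pair_inject insert_ident prod.expand)

locale parallel_edges = state_complex +
  fixes e e'
  assumes e_in_E: "e \<in> E" and e'_in_E: "e' \<in> E" and e_neq_e': "e \<noteq> e'"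
    and ends_parallel: "ends e = ends e'"
    and P_insert_parallel: "\<And>s L. e' \<in> s \<Longrightarrow> P (insert e s) L = P s L"
begin

lemma comps_insert_parallel: "e' \<in> s \<Longrightarrow> comps V ends (insert e s) = comps V ends s"
proof -
  assume "e' \<in> s"
  then have "adj ends (insert e s) = adj ends s" unfolding adj_def using ends_parallel by auto
  then show ?thesis unfolding comps_def by simp
qed

lemma succ_state_insert_parallel:
  assumes "e' \<in> fst S"
  shows "succ_state V ends (add_edge e S) a = map_option (add_edge e) (succ_state V ends S a)"
proof -
  have c: "comps V ends (insert a (insert e (fst S))) = comps V ends (insert a (fst S))"
    using comps_insert_parallel[of "insert a (fst S)"] assms by (simp add: insert_commute)
  have "merges_labels V ends (insert a (insert e (fst S))) (snd S) =
      merges_labels V ends (insert a (fst S)) (snd S)"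
    "lift_labels V ends (insert a (insert e (fst S))) (snd S) =
      lift_labels V ends (insert a (fst S)) (snd S)"
    unfolding merges_labels_def lift_labels_def c by simp_all
  then show ?thesis unfolding succ_state_eq add_edge_def by (simp add: insert_commute)
qed

lemma succ_state_parallel:
  assumes "e' \<in> fst S" "snd S \<subseteq> comps V ends (fst S)"
  shows "succ_state V ends S e = Some (add_edge e S)"
proof -
  have "snd S \<subseteq> comps V ends (insert e (fst S))" using assms comps_insert_parallel by simp
  then show ?thesis unfolding succ_state_eq add_edge_def
    by (simp add: lift_labels_same not_merges_labels_same)
qed

lemma add_edge_in_A_iff: "e' \<in> fst S \<Longrightarrow> add_edge e S \<in> A \<longleftrightarrow> S \<in> A"
  unfolding A_iff add_edge_def using comps_insert_parallel P_insert_parallel e_in_E by auto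

lemma dcoef_adding_parallel:
  assumes "S \<in> A" "e' \<in> fst S" "e \<notin> fst S" "e \<in> fst T"
  shows "dc S T = (if T = add_edge e S then incidence_sign (fst S) e else 0)"
proof -
  have succ_e: "succ_state V ends S e = Some (add_edge e S)"
    using succ_state_parallel assms(1,2) A_iff by blast
  show ?thesis
  proof (cases "T = add_edge e S")
    case True
    then show ?thesis using dcoef_eq_incidence_sign[OF finite_E _ succ_e] e_in_E assms(3) by simp
  next
    case False
    have "dc S T = 0"
    proof (rule ccontr)
      assume "dc S T \<noteq> 0"
      then obtain a where a: "a \<in> E - fst S" "succ_state V ends S a = Some T"
        by (rule dcoef_nonzeroD)
      then have "a = e" using succ_state_SomeD(1)[OF a(2)] assms(3,4) by auto
      then show False using a(2) succ_e False by simp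
    qed
    then show ?thesis using False by simp
  qed
qed

text \<open>This sign identity is what makes the homotopy contract.\<close>

lemma dcoef_add_edge:
  assumes S: "S \<in> A" "e' \<in> fst S" "e \<notin> fst S" and T: "e \<notin> fst T"
  shows "incidence_sign (fst S) e * dc S T =
    - (incidence_sign (fst T) e * dc (add_edge e S) (add_edge e T))"
proof (cases "\<exists>a\<in>E - fst S. succ_state V ends S a = Some T")
  case True
  then obtain a where a: "a \<in> E - fst S" "succ_state V ends S a = Some T" by blast
  have fst_T: "fst T = insert a (fst S)" by (rule succ_state_SomeD(1)[OF a(2)])
  have "a \<noteq> e" using fst_T T by auto
  have succ_a: "succ_state V ends (add_edge e S) a = Some (add_edge e T)"
    using succ_state_insert_parallel[OF S(2)] a(2) by simp
  have "a \<in> E - fst (add_edge e S)" using a(1) \<open>a \<noteq> e\<close> by (simp add: add_edge_def)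
  from dcoef_eq_incidence_sign[OF finite_E this succ_a]
  have "dc (add_edge e S) (add_edge e T) = incidence_sign (insert e (fst S)) a"
    by (simp add: add_edge_def)
  then show ?thesis
    using dcoef_eq_incidence_sign[OF finite_E a] fst_T \<open>a \<noteq> e\<close> a(1) S(3)
      incidence_sign_exchange[OF finite_fst_A[OF S(1)], of a e] by simp
next
  case False
  then have "dc S T = 0" using dcoef_nonzeroD by metis
  moreover have "dc (add_edge e S) (add_edge e T) = 0"
  proof (rule ccontr)
    assume "dc (add_edge e S) (add_edge e T) \<noteq> 0"
    then obtain a where a: "a \<in> E - fst (add_edge e S)"
      "succ_state V ends (add_edge e S) a = Some (add_edge e T)"
      by (rule dcoef_nonzeroD)
    then obtain T' where T': "succ_state V ends S a = Some T'" "add_edge e T' = add_edge e T"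
      using succ_state_insert_parallel[OF S(2)] by auto
    have "e \<notin> fst T'" using succ_state_SomeD(1)[OF T'(1)] a(1) S(3) by (auto simp: add_edge_def)
    then have "T' = T" by (rule add_edge_inj[OF _ T T'(2)])
    then show False using False T'(1) a(1) by (auto simp: add_edge_def)
  qed
  ultimately show ?thesis by simp
qed

abbreviation "A_without_e \<equiv> {S \<in> A. e' \<in> fst S \<and> e \<notin> fst S}"
abbreviation "A_with_e \<equiv> {S \<in> A. e' \<in> fst S \<and> e \<in> fst S}"

lemma sum_A_split:
  assumes "\<And>S. e' \<notin> fst S \<Longrightarrow> g S = 0"
  shows "(\<Sum>S\<in>A. g S) = (\<Sum>S\<in>A_without_e. g S) + (\<Sum>S\<in>A_with_e. g S)"
proof -
  have "(\<Sum>S\<in>A. g S) = (\<Sum>S\<in>A_without_e \<union> A_with_e. g S)"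
    using assms finite_A by (intro sum.mono_neutral_right) auto
  also have "\<dots> = (\<Sum>S\<in>A_without_e. g S) + (\<Sum>S\<in>A_with_e. g S)"
    using finite_A by (intro sum.union_disjoint) auto
  finally show ?thesis .
qed

lemma bij_betw_add_edge: "bij_betw (add_edge e) A_without_e A_with_e"
proof (rule bij_betw_byWitness[where f' = "\<lambda>S. (fst S - {e}, snd S)"])
  show "add_edge e ` A_without_e \<subseteq> A_with_e"
    using add_edge_in_A_iff by (auto simp: add_edge_def)
  show "(\<lambda>S. (fst S - {e}, snd S)) ` A_with_e \<subseteq> A_without_e"
  proof (rule image_subsetI)
    fix S assume S: "S \<in> A_with_e"
    define S0 where "S0 = (fst S - {e}, snd S)"
    have "e' \<in> fst S0" using S e_neq_e' unfolding S0_def by auto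
    then have "add_edge e S0 \<in> A \<longleftrightarrow> S0 \<in> A" by (rule add_edge_in_A_iff)
    moreover have "add_edge e S0 = S" using S unfolding S0_def by (auto simp: add_edge_def prod_eq_iff)
    moreover have "S \<in> A" using S by blast
    ultimately have "(fst S - {e}, snd S) \<in> A" unfolding S0_def by simp
    then show "(fst S - {e}, snd S) \<in> A_without_e" using S e_neq_e' by auto
  qed
qed (auto simp: add_edge_def)

definition homotopy where
  "homotopy w S =
     (if S \<in> A_without_e then incidence_sign (fst S) e * w (add_edge e S) else 0)"

lemma homotopy_vanishes: "e' \<notin> fst S \<Longrightarrow> homotopy w S = 0"
  unfolding homotopy_def by simp

lemma homotopy_cochains:
  assumes w: "w \<in> cochains V E ends P i j"
  shows "homotopy w \<in> cochains V E ends P (i - 1) j"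
  unfolding cochains_def mem_Collect_eq
proof (intro allI impI)
  fix S assume "homotopy w S \<noteq> 0"
  then have S: "S \<in> A" "e' \<in> fst S" "e \<notin> fst S" "w (add_edge e S) \<noteq> 0"
    unfolding homotopy_def by (auto split: if_splits)
  have "add_edge e S \<in> basis V E ends P i j" using w S(4) unfolding cochains_def by blast
  moreover have "card (fst (add_edge e S)) = card (fst S) + 1"
    unfolding add_edge_def using finite_fst_A[OF S(1)] S(3) by simp
  ultimately show "S \<in> basis V E ends P (i - 1) j"
    using S(1) unfolding basis_def add_edge_def by auto
qed

lemma D_homotopy_off_subcomplex:
  assumes "e' \<notin> fst T"
  shows "D (homotopy w) T = 0"
proof -
  have "homotopy w S * dc S T = 0" for S
  proof (cases "dc S T = 0")
    case False
    then obtain a where "fst T = insert a (fst S)" by (rule dcoef_nonzero_fst)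
    then show ?thesis using assms unfolding homotopy_def by auto
  qed simp
  then have "(\<Sum>S\<in>A. homotopy w S * dc S T) = 0" by (intro sum.neutral) blast
  then show ?thesis unfolding diff_def by simp
qed

lemma D_homotopy_with_e:
  assumes T: "T \<in> A" "e' \<in> fst T" "e \<in> fst T"
  shows "D (homotopy w) T = w T"
proof -
  define T0 where "T0 = (fst T - {e}, snd T)"
  have T0: "e' \<in> fst T0" "e \<notin> fst T0" "add_edge e T0 = T"
    using T e_neq_e' unfolding T0_def add_edge_def by (auto simp: prod_eq_iff)
  then have "T0 \<in> A" using add_edge_in_A_iff T(1) by blast
  have "homotopy w S * dc S T = (if S = T0 then w T else 0)" if "S \<in> A" for S
  proof (cases "e' \<in> fst S \<and> e \<notin> fst S")
    case True
    then have "T = add_edge e S \<longleftrightarrow> S = T0"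
      using T0 add_edge_inj by metis
    then show ?thesis
      using dcoef_adding_parallel[OF that _ _ T(3)] True that T0(3)
        incidence_sign_square[of "fst S" e] unfolding homotopy_def by (auto simp: ac_simps)
  qed (use T0 in \<open>auto simp: homotopy_def\<close>)
  then have "D (homotopy w) T = (\<Sum>S\<in>A. if S = T0 then w T else 0)"
    unfolding diff_def using T(1) by simp
  then show ?thesis using \<open>T0 \<in> A\<close> finite_A by simp
qed

lemma sum_dcoef_to_add_edge:
  assumes T: "T \<in> A" "e' \<in> fst T" "e \<notin> fst T"
  shows "(\<Sum>S\<in>A_without_e. w S * dc S (add_edge e T)) = w T * incidence_sign (fst T) e"
proof -
  have "w S * dc S (add_edge e T) = (if S = T then w T * incidence_sign (fst T) e else 0)"
    if "S \<in> A_without_e" for S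
  proof -
    have "add_edge e T = add_edge e S \<longleftrightarrow> S = T"
      using add_edge_inj[of e S T] that T(3) by auto
    moreover have "e \<in> fst (add_edge e T)" unfolding add_edge_def by simp
    ultimately show ?thesis using dcoef_adding_parallel[of S "add_edge e T"] that by auto
  qed
  then have "(\<Sum>S\<in>A_without_e. w S * dc S (add_edge e T)) =
      (\<Sum>S\<in>A_without_e. if S = T then w T * incidence_sign (fst T) e else 0)"
    by (intro sum.cong) auto
  also have "\<dots> = w T * incidence_sign (fst T) e" using T finite_A by simp
  finally show ?thesis .
qed

lemma D_homotopy_without_e:
  assumes w0: "\<And>S. e' \<notin> fst S \<Longrightarrow> w S = 0" and Dw: "D w = (\<lambda>S. 0)"
    and T: "T \<in> A" "e' \<in> fst T" "e \<notin> fst T"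
  shows "D (homotopy w) T = w T"
proof -
  define Te where "Te = add_edge e T"
  define c where "c = incidence_sign (fst T) e"
  have "Te \<in> A" unfolding Te_def using add_edge_in_A_iff T(1,2) by blast
  have "D (homotopy w) T = (\<Sum>S\<in>A_without_e. incidence_sign (fst S) e * dc S T * w (add_edge e S))"
    unfolding diff_def homotopy_def using T(1) finite_A
    by (auto intro!: sum.mono_neutral_cong_right simp: ac_simps)
  also have "\<dots> = (\<Sum>S\<in>A_without_e. - c * (w (add_edge e S) * dc (add_edge e S) Te))"
    using dcoef_add_edge T(3) unfolding c_def Te_def by (intro sum.cong) auto
  also have "\<dots> = - c * (\<Sum>S\<in>A_without_e. w (add_edge e S) * dc (add_edge e S) Te)"
    by (simp add: sum_distrib_left)
  also have "\<dots> = - c * (\<Sum>S\<in>A_with_e. w S * dc S Te)"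
    unfolding sum.reindex_bij_betw[OF bij_betw_add_edge, of "\<lambda>S. w S * dc S Te"] ..
  also have "(\<Sum>S\<in>A_with_e. w S * dc S Te) = - (w T * c)"
    using sum_A_split[of "\<lambda>S. w S * dc S Te"] w0 fun_cong[OF Dw, of Te] \<open>Te \<in> A\<close>
      sum_dcoef_to_add_edge[OF T] unfolding diff_def Te_def c_def by simp
  finally show ?thesis using incidence_sign_square[of "fst T" e] unfolding c_def by (simp add: ac_simps)
qed

lemma D_homotopy:
  assumes w: "w \<in> cochains V E ends P i j" and w0: "\<And>S. e' \<notin> fst S \<Longrightarrow> w S = 0"
    and Dw: "D w = (\<lambda>S. 0)"
  shows "D (homotopy w) = w"
proof
  fix T
  show "D (homotopy w) T = w T"
  proof (cases "T \<in> A")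
    case False
    then have "w T = 0" using w unfolding cochains_def basis_def by blast
    then show ?thesis using False unfolding diff_def by simp
  next
    case True
    consider "e' \<notin> fst T" | "e' \<in> fst T" "e \<in> fst T" | "e' \<in> fst T" "e \<notin> fst T" by blast
    then show ?thesis
      using D_homotopy_off_subcomplex w0 D_homotopy_with_e D_homotopy_without_e[OF w0 Dw] True
      by cases auto
  qed
qed

lemma cocycle_vanishing_off_e'_is_coboundary:
  assumes "w \<in> cochains V E ends P i j" "\<And>S. e' \<notin> fst S \<Longrightarrow> w S = 0" "D w = (\<lambda>S. 0)"
  obtains y where "y \<in> cochains V E ends P (i - 1) j" "\<And>S. e' \<notin> fst S \<Longrightarrow> y S = 0" "D y = w"
  using homotopy_cochains[OF assms(1)] homotopy_vanishes D_homotopy[OF assms] that by blast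

section \<open>Deleting the parallel edge\<close>

sublocale deleted: state_complex V "E - {e'}" ends P
  using finite_V finite_E admissible_pred by unfold_locales auto

abbreviation "D' \<equiv> diff V (E - {e'}) ends P"
abbreviation "B' i j \<equiv> coboundaries V (E - {e'}) ends P i j"

definition restr where
  "restr f S = (if e' \<in> fst S then 0 else f S)"

lemma adm_states_delete_iff:
  "S \<in> adm_states V (E - {e'}) ends P \<longleftrightarrow> S \<in> A \<and> e' \<notin> fst S"
  unfolding adm_states_def states_def by auto

lemma cochains_delete_iff:
  "f \<in> cochains V (E - {e'}) ends P i j \<longleftrightarrow>
     f \<in> cochains V E ends P i j \<and> (\<forall>S. e' \<in> fst S \<longrightarrow> f S = 0)"
  unfolding cochains_def basis_def using adm_states_delete_iff by blast

lemma restr_cochains: "f \<in> cochains V E ends P i j \<Longrightarrow> restr f \<in> cochains V (E - {e'}) ends P i j"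
  unfolding cochains_delete_iff unfolding cochains_def restr_def by auto

lemma restr_id: "f \<in> cochains V (E - {e'}) ends P i j \<Longrightarrow> restr f = f"
  unfolding cochains_delete_iff restr_def by auto

lemma restr_eq_0_iff: "restr f = (\<lambda>S. 0) \<longleftrightarrow> (\<forall>S. e' \<notin> fst S \<longrightarrow> f S = 0)"
  unfolding restr_def by (auto simp: fun_eq_iff)

lemma dcoef_delete:
  assumes "e' \<notin> fst T"
  shows "dcoef V (E - {e'}) ends S T = dc S T"
  unfolding dcoef_def
proof (rule sum.mono_neutral_left)
  show "\<forall>a\<in>E - fst S - (E - {e'} - fst S).
      (if succ_state V ends S a = Some T then (- 1) ^ card {b \<in> fst S. b < a} else 0) = (0::int)"
  proof
    fix a assume "a \<in> E - fst S - (E - {e'} - fst S)"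
    then have "a = e'" by blast
    then show "(if succ_state V ends S a = Some T then (- 1) ^ card {b \<in> fst S. b < a} else 0) = (0::int)"
      using assms succ_state_SomeD(1)[of V ends S a T] by auto
  qed
qed (use finite_E in auto)

lemma restr_D: "D' (restr f) = restr (D f)"
proof
  fix T
  show "D' (restr f) T = restr (D f) T"
  proof (cases "T \<in> adm_states V (E - {e'}) ends P")
    case True
    then have T: "T \<in> A" "e' \<notin> fst T" using adm_states_delete_iff by auto
    have "dc S T = 0" if "e' \<in> fst S" for S
    proof (rule ccontr)
      assume "dc S T \<noteq> 0"
      then obtain a where "fst T = insert a (fst S)" by (rule dcoef_nonzero_fst)
      then show False using that T(2) by simp
    qed
    then have "D' (restr f) T = (\<Sum>S\<in>A. f S * dc S T)"
      unfolding diff_def restr_def using True adm_states_delete_iff dcoef_delete[OF T(2)]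
      by (auto intro!: sum.mono_neutral_cong_left[OF finite_A])
    then show ?thesis unfolding restr_def diff_def using T by simp
  qed (auto simp: diff_def restr_def adm_states_delete_iff)
qed

lemma restr_hom: "restr \<in> hom (cocycle_group i j) (deleted.cocycle_group i j)"
proof (rule homI)
  fix x assume "x \<in> carrier (cocycle_group i j)"
  then have x: "x \<in> cochains V E ends P i j" "D x = (\<lambda>S. 0)" unfolding cocycles_def by auto
  have "D' (restr x) = (\<lambda>S. 0)" unfolding restr_D x(2) restr_def by simp
  then show "restr x \<in> carrier (deleted.cocycle_group i j)" using restr_cochains[OF x(1)] unfolding cocycles_def by simp
qed (auto simp: restr_def)

lemma restr_cocycles_onto:
  assumes "z' \<in> cocycles V (E - {e'}) ends P i j"
  obtains z where "z \<in> cocycles V E ends P i j" "restr z = z'"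
proof -
  have z': "z' \<in> cochains V (E - {e'}) ends P i j" "D' z' = (\<lambda>S. 0)"
    using assms unfolding cocycles_def by auto
  then have z'E: "z' \<in> cochains V E ends P i j" using cochains_delete_iff by blast
  \<comment> \<open>D z' lives on the acyclic subcomplex of states containing e'.\<close>
  have "restr (D z') = (\<lambda>S. 0)" using restr_D[of z'] restr_id[OF z'(1)] z'(2) by simp
  then have Dz'_vanishes: "\<And>S. e' \<notin> fst S \<Longrightarrow> D z' S = 0" unfolding restr_eq_0_iff by blast
  have "D z' \<in> cochains V E ends P (i + 1) j" using D_cochains[of z' "i + 1"] z'E by simp
  then obtain y where
    y: "y \<in> cochains V E ends P (i + 1 - 1) j" "\<And>S. e' \<notin> fst S \<Longrightarrow> y S = 0" "D y = D z'"
    using cocycle_vanishing_off_e'_is_coboundary[OF _ Dz'_vanishes D_D] by blast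
  have "(\<lambda>S. z' S - y S) \<in> cocycles V E ends P i j"
    using y cochains_add[OF z'E cochains_uminus[of y]] unfolding cocycles_def by (simp add: D_minus)
  moreover have "restr (\<lambda>S. z' S - y S) = z'"
    using z'(1) y(2) unfolding cochains_delete_iff restr_def by (auto simp: fun_eq_iff)
  ultimately show ?thesis using that by blast
qed

lemma restr_in_coboundaries_iff:
  assumes z: "z \<in> cocycles V E ends P i j"
  shows "restr z \<in> B' i j \<longleftrightarrow> z \<in> coboundaries V E ends P i j"
proof
  assume "z \<in> coboundaries V E ends P i j"
  then obtain f where f: "f \<in> cochains V E ends P (i - 1) j" "z = D f"
    unfolding coboundaries_def by blast
  then have "restr z = D' (restr f)" by (simp add: restr_D)
  then show "restr z \<in> B' i j" unfolding coboundaries_def using restr_cochains[OF f(1)] by blast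
next
  assume "restr z \<in> B' i j"
  then obtain f' where f': "f' \<in> cochains V (E - {e'}) ends P (i - 1) j" "restr z = D' f'"
    unfolding coboundaries_def by blast
  then have f'E: "f' \<in> cochains V E ends P (i - 1) j" using cochains_delete_iff by blast
  have zE: "z \<in> cochains V E ends P i j" "D z = (\<lambda>S. 0)" using z unfolding cocycles_def by auto
  \<comment> \<open>z - D f' lives on the acyclic subcomplex of states containing e'.\<close>
  define w where "w = (\<lambda>S. z S - D f' S)"
  have "w \<in> cochains V E ends P i j"
    unfolding w_def using cochains_add[OF zE(1) cochains_uminus[OF D_cochains[OF f'E]]] by simp
  moreover have "restr w = (\<lambda>S. 0)"
  proof -
    have eq: "restr (D f') = restr z" using f'(2) restr_D[of f'] restr_id[OF f'(1)] by simp
    show ?thesis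
    proof
      fix S show "restr w S = 0" using fun_cong[OF eq, of S] unfolding w_def restr_def by auto
    qed
  qed
  moreover have "D w = (\<lambda>S. 0)" unfolding w_def D_minus zE(2) D_D by simp
  ultimately obtain y where "y \<in> cochains V E ends P (i - 1) j" "D y = w"
    using cocycle_vanishing_off_e'_is_coboundary unfolding restr_eq_0_iff by metis
  then have "z = D (\<lambda>S. f' S + y S)" "(\<lambda>S. f' S + y S) \<in> cochains V E ends P (i - 1) j"
    unfolding D_add w_def using cochains_add[OF f'E] by auto
  then show "z \<in> coboundaries V E ends P i j" unfolding coboundaries_def by blast
qed

theorem cohom_delete_parallel_iso: "cohom V E ends P i j \<cong> cohom V (E - {e'}) ends P i j"
proof -
  let ?Z = "cocycle_group i j" and ?Z' = "deleted.cocycle_group i j"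
  let ?Q = "?Z' Mod B' i j"
  interpret Z: comm_group ?Z by (rule comm_group_cocycle_group)
  interpret Z': comm_group ?Z' by (rule deleted.comm_group_cocycle_group)
  interpret N': normal "B' i j" ?Z' by (rule deleted.normal_coboundaries)
  define h where "h = (\<lambda>z. B' i j #>\<^bsub>?Z'\<^esub> z) \<circ> restr"
  have "h \<in> hom ?Z ?Q" unfolding h_def by (rule hom_compose[OF restr_hom N'.r_coset_hom_Mod])
  then interpret group_hom ?Z ?Q h
    by (intro group_hom.intro group_hom_axioms.intro Z.is_group N'.factorgroup_is_group)
  have "h ` carrier ?Z = carrier ?Q"
  proof
    show "carrier ?Q \<subseteq> h ` carrier ?Z"
    proof
      fix C assume "C \<in> carrier ?Q"
      then obtain z' where z': "z' \<in> cocycles V (E - {e'}) ends P i j" "C = B' i j #>\<^bsub>?Z'\<^esub> z'"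
        unfolding carrier_FactGroup by auto
      obtain z where "z \<in> cocycles V E ends P i j" "restr z = z'"
        by (rule restr_cocycles_onto[OF z'(1)])
      then show "C \<in> h ` carrier ?Z" unfolding h_def using z'(2) by auto
    qed
  qed (use hom_closed in blast)
  moreover have "kernel ?Z ?Q h = coboundaries V E ends P i j"
  proof -
    have "h z = B' i j \<longleftrightarrow> restr z \<in> B' i j" if "z \<in> cocycles V E ends P i j" for z
    proof -
      have "restr z \<in> carrier ?Z'" using restr_hom that unfolding hom_def by auto
      then show ?thesis unfolding h_def
        using Z'.coset_join1[OF _ _ N'.subgroup_axioms] Z'.coset_join2[OF _ N'.subgroup_axioms]
        by auto
    qed
    moreover have "\<one>\<^bsub>?Q\<^esub> = B' i j" by (simp add: FactGroup_def)
    ultimately show ?thesis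
      unfolding kernel_def cocycle_group_simps(1)
      using restr_in_coboundaries_iff coboundaries_subset_cocycles by blast
  qed
  ultimately show ?thesis unfolding cohom_def using FactGroup_iso by metis
qed

end

section \<open>Negative circuits through parallel edges\<close>

lemma circuit_parallel_length:
  assumes c: "is_circuit ends es vs" and i: "i < length es" and k: "k < length es" and "i \<noteq> k"
    and eq: "ends (es ! i) = ends (es ! k)"
  shows "length es = 2"
proof -
  let ?n = "length es"
  have lv: "length vs = ?n" and dv: "distinct vs"
    and ends_es: "\<And>m. m < ?n \<Longrightarrow> ends (es ! m) = {vs ! m, vs ! ((m + 1) mod ?n)}"
    using c unfolding is_circuit_def by auto
  have n_pos: "0 < ?n" using i by linarith
  have vi_vk: "vs ! i \<noteq> vs ! k" using nth_eq_iff_index_eq[OF dv] i k \<open>i \<noteq> k\<close> lv by simp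
  have "{vs ! i, vs ! ((i + 1) mod ?n)} = {vs ! k, vs ! ((k + 1) mod ?n)}"
    using ends_es[OF i] ends_es[OF k] eq by simp
  then have "vs ! i = vs ! ((k + 1) mod ?n)" "vs ! k = vs ! ((i + 1) mod ?n)"
    using vi_vk by (auto simp: doubleton_eq_iff)
  then have "i = (k + 1) mod ?n" "k = (i + 1) mod ?n"
    using nth_eq_iff_index_eq[OF dv] i k lv n_pos by auto
  then have "i mod ?n = (i + 2) mod ?n" using i by (simp add: mod_Suc_eq)
  then have "?n dvd 2" using mod_eq_dvd_iff_nat[of i "i + 2" ?n] by simp
  then have "?n \<le> 2" by (rule dvd_imp_le) simp
  moreover have "2 \<le> ?n" using i k \<open>i \<noteq> k\<close> by linarith
  ultimately show ?thesis by linarith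
qed

lemma neg_circuit_in_mono:
  "neg_circuit_in ends sigma s K \<Longrightarrow> s \<subseteq> s' \<Longrightarrow> K \<subseteq> K' \<Longrightarrow> neg_circuit_in ends sigma s' K'"
  unfolding neg_circuit_in_def by blast

lemma prod_list_circuit_parallel:
  fixes sigma :: "'e \<Rightarrow> 'a::comm_monoid_mult"
  assumes c: "is_circuit ends es vs" and "e \<in> set es" "e' \<in> set es" "e \<noteq> e'"
    and "ends e = ends e'"
  shows "prod_list (map sigma es) = sigma e * sigma e'"
proof -
  obtain k i where k: "k < length es" "es ! k = e" and i: "i < length es" "es ! i = e'"
    using assms(2,3) by (auto simp: in_set_conv_nth)
  have "i \<noteq> k" using i k \<open>e \<noteq> e'\<close> by auto
  then have "length es = 2" using circuit_parallel_length[OF c i(1) k(1)] i k assms(5) by simp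
  then obtain x y where "es = [x, y]" by (auto simp: numeral_2_eq_2 length_Suc_conv)
  moreover have "(i = 0 \<and> k = 1) \<or> (i = 1 \<and> k = 0)"
    using i k \<open>i \<noteq> k\<close> \<open>length es = 2\<close> by auto
  ultimately show ?thesis using i(2) k(2) by (auto simp: mult.commute)
qed

lemma neg_circuit_in_insert_parallel:
  assumes sig: "sigma e = sigma e'" "sigma e = 1 \<or> sigma e = -1"
    and ends_eq: "ends e = ends e'" and "e \<noteq> e'" and "e' \<in> s"
  shows "neg_circuit_in ends sigma (insert e s) K \<longleftrightarrow> neg_circuit_in ends sigma s K"
proof
  assume "neg_circuit_in ends sigma (insert e s) K"
  then obtain es vs where c: "is_circuit ends es vs" "set es \<subseteq> insert e s" "set vs \<subseteq> K"
    "prod_list (map sigma es) = -1" unfolding neg_circuit_in_def by blast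
  show "neg_circuit_in ends sigma s K"
  proof (cases "e \<in> set es")
    case False
    then show ?thesis unfolding neg_circuit_in_def using c by blast
  next
    case True
    then obtain k where k: "k < length es" "es ! k = e" by (auto simp: in_set_conv_nth)
    show ?thesis
    proof (cases "e' \<in> set es")
      case True
      then have "prod_list (map sigma es) = sigma e * sigma e'"
        using prod_list_circuit_parallel[OF c(1) \<open>e \<in> set es\<close> _ \<open>e \<noteq> e'\<close> ends_eq] by blast
      then show ?thesis using c(4) sig by auto
    next
      case False
      let ?es = "es[k := e']"
      have "is_circuit ends ?es vs"
        using c(1) k ends_eq False unfolding is_circuit_def
        by (auto simp: nth_list_update distinct_list_update)
      moreover have "set ?es \<subseteq> s"
        using c(2) \<open>e' \<in> s\<close> set_update_distinct[of es k e'] k c(1)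
        unfolding is_circuit_def by auto
      moreover have "map sigma ?es = map sigma es"
        using k sig(1) by (metis list_update_id map_update)
      ultimately show ?thesis unfolding neg_circuit_in_def using c(3,4) by metis
    qed
  qed
qed (rule neg_circuit_in_mono, auto)

section \<open>The two cohomologies of a signed graph\<close>

lemma parallel_edges_H:
  assumes "signed_graph V E ends sigma"
    and "e \<in> E" and "e' \<in> E" and "e \<noteq> e'" and "ends e = ends e'" and "sigma e = sigma e'"
  shows "parallel_edges V E ends (\<lambda>s L. \<forall>K\<in>L. \<not> neg_circuit_in ends sigma s K) e e'"
proof unfold_locales
  fix s L a T
  assume L: "L \<subseteq> comps V ends s" and T: "succ_state V ends (s, L) a = Some T"
    and PT: "\<forall>K'\<in>snd T. \<not> neg_circuit_in ends sigma (fst T) K'"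
  show "\<forall>K\<in>L. \<not> neg_circuit_in ends sigma s K"
  proof
    fix K assume "K \<in> L"
    then have "K \<in> comps V ends s" using L by blast
    then obtain K' where K': "K' \<in> comps V ends (insert a s)" "K \<subseteq> K'"
      using comps_refine[OF _ subset_insertI[of s a]] by blast
    then have "K' \<in> snd T"
      using succ_state_SomeD(2)[OF T] \<open>K \<in> L\<close> unfolding lift_labels_def by auto
    then have "\<not> neg_circuit_in ends sigma (insert a s) K'"
      using PT succ_state_SomeD(1)[OF T] by simp
    then show "\<not> neg_circuit_in ends sigma s K"
      using neg_circuit_in_mono[OF _ subset_insertI[of s a] K'(2)] by blast
  qed
next
  fix s L assume "e' \<in> s"
  then show "(\<forall>K\<in>L. \<not> neg_circuit_in ends sigma (insert e s) K) \<longleftrightarrow>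
      (\<forall>K\<in>L. \<not> neg_circuit_in ends sigma s K)"
    using neg_circuit_in_insert_parallel[OF assms(6) _ assms(5,4)] assms(1,2)
    unfolding signed_graph_def by simp
qed (use assms in \<open>auto simp: signed_graph_def\<close>)

lemma parallel_edges_Hb:
  assumes "signed_graph V E ends sigma"
    and "e \<in> E" and "e' \<in> E" and "e \<noteq> e'" and "ends e = ends e'" and "sigma e = sigma e'"
  shows "parallel_edges V E ends (\<lambda>s L. balanced_sub ends sigma s) e e'"
proof unfold_locales
  fix s L a T
  assume T: "succ_state V ends (s, L) a = Some T" and "balanced_sub ends sigma (fst T)"
  moreover have "fst T = insert a s" using succ_state_SomeD(1)[OF T] by simp
  ultimately show "balanced_sub ends sigma s"
    using neg_circuit_in_mono[of ends sigma s UNIV "insert a s" UNIV] unfolding balanced_sub_def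
    by auto
next
  fix s L assume "e' \<in> s"
  then show "balanced_sub ends sigma (insert e s) \<longleftrightarrow> balanced_sub ends sigma s"
    using neg_circuit_in_insert_parallel[OF assms(6) _ assms(5,4)] assms(1,2)
    unfolding signed_graph_def balanced_sub_def by simp
qed (use assms in \<open>auto simp: signed_graph_def\<close>)

theorem proposition5p8:
  fixes V :: "'v set" and E :: "'e::linorder set" and ends :: "'e \<Rightarrow> 'v set"
    and sigma :: "'e \<Rightarrow> int" and e e' :: 'e
  assumes "signed_graph V E ends sigma"
    and "e \<in> E" and "e' \<in> E" and "e \<noteq> e'"
    and "ends e = ends e'" and "sigma e = sigma e'"
  shows "\<forall>(i::int) (j::nat).
           H V E ends sigma i j \<cong> H V (E - {e'}) ends sigma i j \<and>
           Hb V E ends sigma i j \<cong> Hb V (E - {e'}) ends sigma i j"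
proof (intro allI conjI)
  fix i j
  show "H V E ends sigma i j \<cong> H V (E - {e'}) ends sigma i j" unfolding H_def
    by (rule parallel_edges.cohom_delete_parallel_iso[OF parallel_edges_H[OF assms]])
  show "Hb V E ends sigma i j \<cong> Hb V (E - {e'}) ends sigma i j" unfolding Hb_def
    by (rule parallel_edges.cohom_delete_parallel_iso[OF parallel_edges_Hb[OF assms]])
qed

end
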